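(* The RMMS is self-maximizing: for every finite item set $M$, every $n\ge1$, and every two normalized monotone valuations $v,v'$ on $M$, there exists a bundle $T\subseteq M$ such that $v'(T)\ge \mathrm{RMMS}(M,v',n)$ and $v(T)\le \mathrm{RMMS}(M,v,n)$.
   Context: A valuation is a function $v:2^M\to\mathbb{R}$ that is normalized ($v(\emptyset)=0$) and monotone ($v(S)\le v(T)$ whenever $S\subseteq T$). Residual maximin share: $\mathrm{RMMS}(M,v,n)$ is the largest real $t$ with the following property: for every $0\le k<n$ and every $k$ pairwise disjoint bundles $B_1,\dots,B_k\subseteq M$ with $v(B_j)<t$ for all $j$, the set $M\setminus(B_1\cup\dots\cup B_k)$ can be partitioned into $n-k$ bundles each of value (under $v$) at least $t$. *)

theory Defs
  imports Complex_Main
begin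

definition valuation :: "'a set \<Rightarrow> ('a set \<Rightarrow> real) \<Rightarrow> bool" where
  "valuation M v \<longleftrightarrow> v {} = 0 \<and> (\<forall>S T. S \<subseteq> T \<and> T \<subseteq> M \<longrightarrow> v S \<le> v T)"

definition partitions_into :: "'a set \<Rightarrow> nat \<Rightarrow> (nat \<Rightarrow> 'a set) \<Rightarrow> bool" where
  "partitions_into S m P \<longleftrightarrow>
     (\<forall>i<m. \<forall>j<m. i \<noteq> j \<longrightarrow> P i \<inter> P j = {}) \<and> (\<Union>i<m. P i) = S"

definition rmms_property :: "'a set \<Rightarrow> ('a set \<Rightarrow> real) \<Rightarrow> nat \<Rightarrow> real \<Rightarrow> bool" where
  "rmms_property M v n t \<longleftrightarrow>
     (\<forall>k<n. \<forall>B :: nat \<Rightarrow> 'a set.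
        (\<forall>j<k. B j \<subseteq> M) \<and> (\<forall>i<k. \<forall>j<k. i \<noteq> j \<longrightarrow> B i \<inter> B j = {}) \<and>
        (\<forall>j<k. v (B j) < t)
        \<longrightarrow> (\<exists>P. partitions_into (M - (\<Union>j<k. B j)) (n - k) P \<and>
                 (\<forall>i<n - k. v (P i) \<ge> t)))"

definition RMMS :: "'a set \<Rightarrow> ('a set \<Rightarrow> real) \<Rightarrow> nat \<Rightarrow> real" where
  "RMMS M v n = (GREATEST t. rmms_property M v n t)"

end

theory Submission
  imports Defs
begin

text \<open>Let \<open>t'\<close> satisfy the RMMS property for \<open>v'\<close> and let \<open>T\<close> minimise \<open>v\<close> among the bundles
  with \<open>v' T \<ge> t'\<close>. Then \<open>v T\<close> satisfies the RMMS property for \<open>v\<close>: a bundle of \<open>v\<close>-value below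
  \<open>v T\<close> has \<open>v'\<close>-value below \<open>t'\<close>, so the residue splits into bundles of \<open>v'\<close>-value at least
  \<open>t'\<close>, which have \<open>v\<close>-value at least \<open>v T\<close>. Taking \<open>t' = RMMS M v' n\<close> gives
  \<open>v T \<le> RMMS M v n\<close>. Since \<open>M\<close> is finite, the same argument with \<open>v' = v\<close> shows that the
  property is inherited by a bundle value above any admissible threshold, so the greatest
  threshold exists and \<open>RMMS\<close> is well defined.\<close>

lemma valuation_nonneg: "valuation M v \<Longrightarrow> S \<subseteq> M \<Longrightarrow> 0 \<le> v S"
  unfolding valuation_def by (metis empty_subsetI)

lemma partitions_into_subset: "partitions_into S m P \<Longrightarrow> i < m \<Longrightarrow> P i \<subseteq> S"
  unfolding partitions_into_def by blast

lemma rmms_property_zero: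
  assumes "valuation M v" and "n \<ge> 1"
  shows "rmms_property M v n 0"
  unfolding rmms_property_def
proof (intro allI impI)
  fix k and B :: "nat \<Rightarrow> 'a set"
  assume "k < n" and B: "(\<forall>j<k. B j \<subseteq> M) \<and> (\<forall>i<k. \<forall>j<k. i \<noteq> j \<longrightarrow> B i \<inter> B j = {})
    \<and> (\<forall>j<k. v (B j) < 0)"
  have "k = 0"
    using B valuation_nonneg[OF assms(1)] by (metis gr0I not_less)
  define P where "P = (\<lambda>i::nat. if i = 0 then M else {})"
  have "partitions_into M n P"
    using assms(2) unfolding partitions_into_def P_def by (auto intro!: bexI[of _ 0])
  moreover have "\<forall>i<n. 0 \<le> v (P i)"
    using valuation_nonneg[OF assms(1)] unfolding P_def by auto
  ultimately show "\<exists>P. partitions_into (M - (\<Union>j<k. B j)) (n - k) P \<and> (\<forall>i<n - k. 0 \<le> v (P i))"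
    using \<open>k = 0\<close> by auto
qed

lemma rmms_property_bundle_exists:
  assumes "rmms_property M v n t" and "n \<ge> 1"
  shows "\<exists>T \<subseteq> M. t \<le> v T"
proof -
  have "\<exists>P. partitions_into (M - (\<Union>j<0. {})) (n - 0) P \<and> (\<forall>i<n - 0. t \<le> v (P i))"
    using assms(1)[unfolded rmms_property_def, rule_format, of 0 "\<lambda>_. {}"] assms(2) by simp
  then obtain P where "partitions_into M n P" and "t \<le> v (P 0)"
    using assms(2) by auto
  moreover have "P 0 \<subseteq> M"
    using partitions_into_subset[OF \<open>partitions_into M n P\<close>] assms(2) by simp
  ultimately show ?thesis
    by blast
qed

lemma rmms_property_transfer:
  assumes prop': "rmms_property M v' n t'"
    and below: "\<And>T. T \<subseteq> M \<Longrightarrow> t' \<le> v' T \<Longrightarrow> m \<le> v T"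
  shows "rmms_property M v n m"
  unfolding rmms_property_def
proof (intro allI impI)
  fix k and B :: "nat \<Rightarrow> 'a set"
  assume "k < n" and B: "(\<forall>j<k. B j \<subseteq> M) \<and> (\<forall>i<k. \<forall>j<k. i \<noteq> j \<longrightarrow> B i \<inter> B j = {})
    \<and> (\<forall>j<k. v (B j) < m)"
  have "v' (B j) < t'" if "j < k" for j
  proof (rule ccontr)
    assume "\<not> v' (B j) < t'"
    then have "m \<le> v (B j)"
      using below B that by simp
    with B that show False
      by fastforce
  qed
  then have "\<exists>Q. partitions_into (M - (\<Union>j<k. B j)) (n - k) Q \<and> (\<forall>i<n - k. t' \<le> v' (Q i))"
    using B by (intro prop'[unfolded rmms_property_def, rule_format, OF \<open>k < n\<close>]) blast
  then obtain Q where Q: "partitions_into (M - (\<Union>j<k. B j)) (n - k) Q" "\<forall>i<n - k. t' \<le> v' (Q i)"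
    by blast
  have "m \<le> v (Q i)" if "i < n - k" for i
  proof (rule below)
    show "Q i \<subseteq> M"
      using partitions_into_subset[OF Q(1) that] by blast
    show "t' \<le> v' (Q i)"
      using Q(2) that by blast
  qed
  with Q(1) show "\<exists>P. partitions_into (M - (\<Union>j<k. B j)) (n - k) P \<and> (\<forall>i<n - k. m \<le> v (P i))"
    by blast
qed

lemma rmms_property_at_minimal_bundle:
  assumes "finite M" and "n \<ge> 1" and prop': "rmms_property M v' n t'"
  shows "\<exists>T \<subseteq> M. t' \<le> v' T \<and> rmms_property M v n (v T)"
proof -
  define F where "F = {T. T \<subseteq> M \<and> t' \<le> v' T}"
  have "finite F"
    using assms(1) by (rule finite_subset[rotated, OF finite_Pow_iff[THEN iffD2]]) (auto simp: F_def)
  moreover have "F \<noteq> {}"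
    using rmms_property_bundle_exists[OF prop' assms(2)] unfolding F_def by blast
  ultimately have T_in: "arg_min_on v F \<in> F" and T_min: "\<And>T'. T' \<in> F \<Longrightarrow> v (arg_min_on v F) \<le> v T'"
    by (auto intro: arg_min_if_finite arg_min_least)
  have "rmms_property M v n (v (arg_min_on v F))"
    using prop' by (rule rmms_property_transfer) (rule T_min, simp add: F_def)
  with T_in show ?thesis
    unfolding F_def by blast
qed

lemma RMMS_is_greatest:
  assumes "finite M" and "valuation M v" and "n \<ge> 1"
  shows "rmms_property M v n (RMMS M v n)"
    and "rmms_property M v n t \<Longrightarrow> t \<le> RMMS M v n"
proof -
  define G where "G = {x \<in> v ` Pow M. rmms_property M v n x}"
  have "finite G"
    using assms(1) unfolding G_def by simp
  have "v {} = 0"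
    using assms(2) unfolding valuation_def by simp
  then have "0 \<in> G"
    using rmms_property_zero[OF assms(2,3)] unfolding G_def by force
  have dominated: "t \<le> Max G" if prop_t: "rmms_property M v n t" for t
  proof -
    obtain T where "T \<subseteq> M" and "t \<le> v T" and "rmms_property M v n (v T)"
      using rmms_property_at_minimal_bundle[OF assms(1,3) prop_t] by blast
    then have "v T \<in> G"
      unfolding G_def by blast
    with \<open>finite G\<close> \<open>t \<le> v T\<close> show ?thesis
      using Max_ge order_trans by blast
  qed
  have "Max G \<in> G"
    using \<open>finite G\<close> \<open>0 \<in> G\<close> Max_in by blast
  then have "rmms_property M v n (Max G)"
    unfolding G_def by blast
  then have "RMMS M v n = Max G"
    unfolding RMMS_def using dominated by (rule Greatest_equality)
  with \<open>rmms_property M v n (Max G)\<close> dominated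
  show "rmms_property M v n (RMMS M v n)" and "rmms_property M v n t \<Longrightarrow> t \<le> RMMS M v n"
    by auto
qed

theorem proposition3:
  fixes M :: "'a set" and v v' :: "'a set \<Rightarrow> real" and n :: nat
  assumes "finite M" and "n \<ge> 1"
    and "valuation M v" and "valuation M v'"
  shows "\<exists>T \<subseteq> M. v' T \<ge> RMMS M v' n \<and> v T \<le> RMMS M v n"
proof -
  obtain T where "T \<subseteq> M" and "RMMS M v' n \<le> v' T" and "rmms_property M v n (v T)"
    using rmms_property_at_minimal_bundle[OF assms(1,2) RMMS_is_greatest(1)[OF assms(1,4,2)]]
    by blast
  moreover have "v T \<le> RMMS M v n"
    using RMMS_is_greatest(2)[OF assms(1,3,2)] \<open>rmms_property M v n (v T)\<close> .
  ultimately show ?thesis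
    by blast
qed

end
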